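(* Let $n,m$ be positive integers and $\alpha_1,\dots,\alpha_n$ the simple roots of type $A_n$. There exists a bijection $\varphi_n:\mathcal{R}^m_n\to\mathcal{P}^m_n$ such that for every $i\in\{1,\dots,n\}$ and every $R\in\mathcal{R}^m_n$, the hyperplane $H_{\alpha_i,m}$ is a separating wall of $R$ if and only if the $i$-th part of the partition $\varphi_n(R)$ equals $(n-i+1)m$.
   Context: Type $A_n$: $V=\{x\in\mathbb{R}^{n+1}:\sum x_i=0\}$ with standard inner product; positive roots $\alpha_{ij}=\varepsilon_i-\varepsilon_{j+1}$ ($1\le i\le j\le n$), simple roots $\alpha_i=\varepsilon_i-\varepsilon_{i+1}$. $H_{\alpha,k}=\{v\in V:\langle v,\alpha\rangle=k\}$. $\mathrm{Cat}^m(A_n)$ is the arrangement of the $H_{\alpha,k}$, $\alpha$ positive, $0\le k\le m$. $\mathcal{R}^m_n$ is the set of dominant regions (connected components of the complement contained in $\{v:\langle v,\alpha\rangle\ge 0\ \forall\alpha>0\}$). A separating wall of a region $R$ is a hyperplane of the arrangement supporting a facet of $R$ such that $R$ and the origin lie on different sides of it. $\mathcal{P}^m_n$ is the set of integer partitions $\lambda=(\lambda_1,\dots,\lambda_n)$ with $\lambda_1\ge\lambda_2\ge\cdots\ge\lambda_n\ge0$ and $\lambda_i\le m(n-i+1)$ for all $i$. *)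

theory Defs
  imports "HOL-Analysis.Analysis"
begin

text \<open>Vectors of R^(n+1) are modelled as functions nat => real,
  with coordinates indexed 1..n+1 (coordinates outside 1..n+1 are 0).
  The topology is the product topology on nat => real (which on the
  finite-support subspace V agrees with the Euclidean topology).\<close>

definition V :: "nat \<Rightarrow> (nat \<Rightarrow> real) set" where
  "V n = {x. (\<forall>i. i \<notin> {1..n+1} \<longrightarrow> x i = 0) \<and> (\<Sum>i=1..n+1. x i) = 0}"

definition ip :: "nat \<Rightarrow> (nat \<Rightarrow> real) \<Rightarrow> (nat \<Rightarrow> real) \<Rightarrow> real" where
  "ip n v a = (\<Sum>k=1..n+1. v k * a k)"

definition eps :: "nat \<Rightarrow> nat \<Rightarrow> real" where
  "eps i = (\<lambda>k. if k = i then 1 else 0)"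

definition alpha :: "nat \<Rightarrow> nat \<Rightarrow> nat \<Rightarrow> real" where
  "alpha i j = (\<lambda>k. eps i k - eps (j+1) k)"

definition simple_root :: "nat \<Rightarrow> nat \<Rightarrow> real" where
  "simple_root i = alpha i i"

definition pos_roots :: "nat \<Rightarrow> (nat \<Rightarrow> real) set" where
  "pos_roots n = {alpha i j | i j. 1 \<le> i \<and> i \<le> j \<and> j \<le> n}"

definition hyp :: "nat \<Rightarrow> (nat \<Rightarrow> real) \<Rightarrow> real \<Rightarrow> (nat \<Rightarrow> real) set" where
  "hyp n a k = {v \<in> V n. ip n v a = k}"

definition cat_arr :: "nat \<Rightarrow> nat \<Rightarrow> (nat \<Rightarrow> real) set set" where
  "cat_arr n m = {hyp n a (real k) | a k. a \<in> pos_roots n \<and> k \<le> m}"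

definition complement :: "nat \<Rightarrow> nat \<Rightarrow> (nat \<Rightarrow> real) set" where
  "complement n m = V n - \<Union>(cat_arr n m)"

definition dominant_cone :: "nat \<Rightarrow> (nat \<Rightarrow> real) set" where
  "dominant_cone n = {v \<in> V n. \<forall>a \<in> pos_roots n. ip n v a \<ge> 0}"

definition dom_regions :: "nat \<Rightarrow> nat \<Rightarrow> (nat \<Rightarrow> real) set set" where
  "dom_regions n m = {R. \<exists>x \<in> complement n m.
       R = connected_component_set (complement n m) x \<and> R \<subseteq> dominant_cone n}"

definition aff_hull :: "(nat \<Rightarrow> real) set \<Rightarrow> (nat \<Rightarrow> real) set" where
  "aff_hull S = {x. \<exists>F u. finite F \<and> F \<noteq> {} \<and> F \<subseteq> S \<and> sum u F = 1 \<and>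
                         x = (\<lambda>k. \<Sum>y\<in>F. u y * y k)}"

text \<open>H supports a facet of R: H \<inter> closure R affinely spans H (has codimension 1 in V).\<close>
definition sep_wall :: "nat \<Rightarrow> nat \<Rightarrow> (nat \<Rightarrow> real) set \<Rightarrow> (nat \<Rightarrow> real) set \<Rightarrow> bool" where
  "sep_wall n m R H \<longleftrightarrow> H \<in> cat_arr n m \<and> aff_hull (H \<inter> closure R) = H \<and>
     (\<exists>a k. a \<in> pos_roots n \<and> H = hyp n a k \<and>
        (\<forall>x \<in> R. (ip n x a - k) * (ip n (\<lambda>_. 0) a - k) < 0))"

definition partitions :: "nat \<Rightarrow> nat \<Rightarrow> (nat \<Rightarrow> nat) set" where
  "partitions n m = {lam. (\<forall>i. i \<notin> {1..n} \<longrightarrow> lam i = 0) \<and>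
      (\<forall>i j. 1 \<le> i \<and> i \<le> j \<and> j \<le> n \<longrightarrow> lam j \<le> lam i) \<and>
      (\<forall>i \<in> {1..n}. lam i \<le> m * (n - i + 1))}"

end

theory Submission
  imports Defs
begin

text \<open>A point x of V lies in a dominant region of Cat^m(A_n) exactly when its coordinates
  strictly decrease and no difference x_a - x_b (a < b) is one of 0, ..., m. Two such points
  lie in the same region iff they are on the same side of every hyperplane, i.e. iff
  every difference x_a - x_b lies in the same interval between consecutive integers of 0..m.
  This data is encoded by the partition whose i-th part counts the pairs (j, t) with
  i < j, 1 \<le> t \<le> m and t < x_i - x_j. Reading the rows from the bottom, row i together with
  the rows below it determines all the sign conditions involving x_i, which gives
  injectivity; conversely the coordinates can be chosen from x_(n+1) upwards so as to
  realise any prescribed row lengths, which gives surjectivity. Finally H_{\<alpha>_i,m} is a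
  separating wall iff x_i - x_(i+1) > m, i.e. iff row i is full.\<close>

section \<open>Roots and hyperplanes in coordinates\<close>

lemma pos_roots_iff:
  "a \<in> pos_roots n \<longleftrightarrow> (\<exists>p b. 1 \<le> p \<and> p < b \<and> b \<le> n+1 \<and> a = alpha p (b-1))"
proof
  assume "a \<in> pos_roots n"
  then obtain i j where "a = alpha i j" "1 \<le> i" "i \<le> j" "j \<le> n" unfolding pos_roots_def by blast
  then show "\<exists>p b. 1 \<le> p \<and> p < b \<and> b \<le> n+1 \<and> a = alpha p (b-1)"
    by (intro exI[of _ i] exI[of _ "j+1"]) simp
next
  assume "\<exists>p b. 1 \<le> p \<and> p < b \<and> b \<le> n+1 \<and> a = alpha p (b-1)"
  then show "a \<in> pos_roots n" unfolding pos_roots_def by force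
qed

lemma ball_pos_roots:
  "(\<forall>r\<in>pos_roots n. P r) \<longleftrightarrow> (\<forall>p b. 1 \<le> p \<and> p < b \<and> b \<le> n+1 \<longrightarrow> P (alpha p (b-1)))"
  unfolding Ball_def pos_roots_iff by blast

lemma bex_pos_roots:
  "(\<exists>r\<in>pos_roots n. P r) \<longleftrightarrow> (\<exists>p b. 1 \<le> p \<and> p < b \<and> b \<le> n+1 \<and> P (alpha p (b-1)))"
  unfolding Bex_def pos_roots_iff by blast

lemma ip_alpha:
  assumes "1 \<le> p" "p < b" "b \<le> n+1"
  shows "ip n v (alpha p (b-1)) = v p - v b"
proof -
  have "ip n v (alpha p (b-1)) = (\<Sum>k=1..n+1. v k * eps p k) - (\<Sum>k=1..n+1. v k * eps b k)"
    using assms unfolding ip_def alpha_def by (simp add: algebra_simps sum_subtractf)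
  also have "\<dots> = v p - v b"
    using assms unfolding eps_def by (simp add: if_distrib cong: if_cong)
  finally show ?thesis .
qed

lemma ip_simple_root: "1 \<le> i \<Longrightarrow> i \<le> n \<Longrightarrow> ip n v (simple_root i) = v i - v (i+1)"
  using ip_alpha[of i "i+1" n v] by (simp add: simple_root_def)

lemma simple_root_mem_pos_roots: "1 \<le> i \<Longrightarrow> i \<le> n \<Longrightarrow> simple_root i \<in> pos_roots n"
  unfolding simple_root_def pos_roots_def by blast

lemma ip_zero_left: "ip n (\<lambda>_. 0) a = 0"
  unfolding ip_def by simp

lemma V_lin_comb:
  assumes "u \<in> V n" "v \<in> V n"
  shows "(\<lambda>k. c * u k + d * v k) \<in> V n"
proof -
  have "(\<Sum>k=1..n+1. c * u k + d * v k) = c * (\<Sum>k=1..n+1. u k) + d * (\<Sum>k=1..n+1. v k)"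
    by (simp only: sum.distrib flip: sum_distrib_left)
  then show ?thesis using assms unfolding V_def by auto
qed

definition avoids_arrangement :: "nat \<Rightarrow> nat \<Rightarrow> (nat \<Rightarrow> real) \<Rightarrow> bool" where
  "avoids_arrangement n m x \<longleftrightarrow>
     (\<forall>a b t. 1 \<le> a \<and> a < b \<and> b \<le> n+1 \<and> t \<le> m \<longrightarrow> x a - x b \<noteq> real t)"

lemma complement_iff: "x \<in> complement n m \<longleftrightarrow> x \<in> V n \<and> avoids_arrangement n m x"
proof -
  have "x \<in> \<Union>(cat_arr n m) \<longleftrightarrow> (\<exists>r\<in>pos_roots n. \<exists>t\<le>m. x \<in> V n \<and> ip n x r = real t)"
    unfolding cat_arr_def hyp_def by blast
  also have "\<dots> \<longleftrightarrow> x \<in> V n \<and> \<not> avoids_arrangement n m x"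
  proof -
    have "ip n x (alpha p (b-1)) = real t \<longleftrightarrow> x p - x b = real t" if "1 \<le> p" "p < b" "b \<le> n+1" for p b t
      using ip_alpha[OF that] by simp
    then show ?thesis unfolding bex_pos_roots avoids_arrangement_def by blast
  qed
  finally show ?thesis unfolding complement_def by blast
qed

lemma dominant_cone_iff:
  "x \<in> dominant_cone n \<longleftrightarrow> x \<in> V n \<and> (\<forall>a b. 1 \<le> a \<and> a < b \<and> b \<le> n+1 \<longrightarrow> x b \<le> x a)"
proof -
  have "0 \<le> ip n x (alpha p (b-1)) \<longleftrightarrow> x b \<le> x p" if "1 \<le> p" "p < b" "b \<le> n+1" for p b
    using ip_alpha[OF that] by simp
  then show ?thesis unfolding dominant_cone_def ball_pos_roots by blast
qed

section \<open>Dominant regions as classes of sign vectors\<close>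

definition same_side_from :: "nat \<Rightarrow> nat \<Rightarrow> nat \<Rightarrow> (nat \<Rightarrow> real) \<Rightarrow> (nat \<Rightarrow> real) \<Rightarrow> bool" where
  "same_side_from n m i x y \<longleftrightarrow> (\<forall>a b t. i \<le> a \<and> a < b \<and> b \<le> n+1 \<and> t \<le> m \<longrightarrow>
      (real t < x a - x b \<longleftrightarrow> real t < y a - y b))"

abbreviation same_side :: "nat \<Rightarrow> nat \<Rightarrow> (nat \<Rightarrow> real) \<Rightarrow> (nat \<Rightarrow> real) \<Rightarrow> bool" where
  "same_side n m \<equiv> same_side_from n m 1"

abbreviation region :: "nat \<Rightarrow> nat \<Rightarrow> (nat \<Rightarrow> real) \<Rightarrow> (nat \<Rightarrow> real) set" where
  "region n m x \<equiv> connected_component_set (complement n m) x"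

lemma connected_sign_invariant:
  fixes f :: "'a::topological_space \<Rightarrow> real"
  assumes "connected S" "continuous_on S f" "\<forall>z\<in>S. f z \<noteq> 0" "a \<in> S" "b \<in> S"
  shows "0 < f a \<longleftrightarrow> 0 < f b"
proof -
  have "is_interval (f ` S)"
    using connected_continuous_image[OF assms(2,1)] by (simp add: is_interval_connected_1)
  moreover have "f a \<in> f ` S" "f b \<in> f ` S" "0 \<notin> f ` S" using assms(3-5) by auto
  ultimately show ?thesis
    unfolding is_interval_1 by (metis linorder_neqE_linordered_idom order.strict_iff_not)
qed

lemma convex_comb_pos:
  fixes s u v :: real
  assumes "0 \<le> s" "s \<le> 1" "0 < u" "0 < v"
  shows "0 < (1-s) * u + s * v"
  using assms by (cases "s = 0") (auto intro: add_nonneg_pos)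

text \<open>Connected components of the complement are cut out by the sign vectors: one direction
  because each x_a - x_b - t is continuous and nonvanishing on a component, the other because
  the segment between two points with the same sign vector stays in the complement.\<close>

lemma region_iff:
  assumes x: "x \<in> complement n m"
  shows "y \<in> region n m x \<longleftrightarrow> y \<in> complement n m \<and> same_side n m x y"
proof
  assume y: "y \<in> region n m x"
  have sub: "region n m x \<subseteq> complement n m" by (rule connected_component_subset)
  have "same_side n m x y" unfolding same_side_from_def
  proof (intro allI impI)
    fix a b t assume abt: "1 \<le> a \<and> a < b \<and> b \<le> n+1 \<and> t \<le> m"
    have cont: "continuous_on (region n m x) (\<lambda>z. z a - z b - real t)"
      by (intro continuous_intros continuous_on_subset[OF continuous_on_product_coordinates subset_UNIV])
    have nz: "\<forall>z\<in>region n m x. z a - z b - real t \<noteq> 0"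
      using sub abt by (auto simp: complement_iff avoids_arrangement_def)
    have "x \<in> region n m x" using x by simp
    then have "0 < x a - x b - real t \<longleftrightarrow> 0 < y a - y b - real t"
      using connected_sign_invariant[OF connected_connected_component cont nz _ y] by blast
    then show "real t < x a - x b \<longleftrightarrow> real t < y a - y b" by simp
  qed
  then show "y \<in> complement n m \<and> same_side n m x y" using y sub by blast
next
  assume y: "y \<in> complement n m \<and> same_side n m x y"
  have xV: "x \<in> V n" and ax: "avoids_arrangement n m x" using x by (simp_all add: complement_iff)
  have yV: "y \<in> V n" and ay: "avoids_arrangement n m y" using y by (simp_all add: complement_iff)
  define p where "p = (\<lambda>s::real. \<lambda>k. (1-s) * x k + s * y k)"
  have "p ` {0..1} \<subseteq> complement n m"
  proof
    fix z assume "z \<in> p ` {0..1}"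
    then obtain s where s: "0 \<le> s" "s \<le> 1" "z = p s" by auto
    have "avoids_arrangement n m z" unfolding avoids_arrangement_def
    proof (intro allI impI)
      fix a b t assume abt: "1 \<le> a \<and> a < b \<and> b \<le> n+1 \<and> t \<le> m"
      have zd: "z a - z b - real t = (1-s) * (x a - x b - real t) + s * (y a - y b - real t)"
        unfolding s(3) p_def by (simp add: algebra_simps)
      have "x a - x b \<noteq> real t" "y a - y b \<noteq> real t"
        using ax ay abt unfolding avoids_arrangement_def by blast+
      moreover have "real t < x a - x b \<longleftrightarrow> real t < y a - y b"
        using y abt unfolding same_side_from_def by blast
      ultimately have "0 < x a - x b - real t \<and> 0 < y a - y b - real t \<or>
          0 < real t - (x a - x b) \<and> 0 < real t - (y a - y b)" by argo
      then show "z a - z b \<noteq> real t"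
      proof
        assume "0 < x a - x b - real t \<and> 0 < y a - y b - real t"
        then have "0 < z a - z b - real t" unfolding zd by (intro convex_comb_pos[OF s(1,2)]) auto
        then show ?thesis by simp
      next
        assume "0 < real t - (x a - x b) \<and> 0 < real t - (y a - y b)"
        then have "0 < (1-s) * (real t - (x a - x b)) + s * (real t - (y a - y b))"
          by (intro convex_comb_pos[OF s(1,2)]) auto
        then show ?thesis using zd by (simp add: algebra_simps)
      qed
    qed
    then show "z \<in> complement n m"
      using V_lin_comb[OF xV yV] s by (simp add: complement_iff p_def)
  qed
  moreover have "connected (p ` {0..1})" unfolding p_def
    by (intro connected_continuous_image connected_Icc
        continuous_on_coordinatewise_then_product continuous_intros)
  moreover have "x \<in> p ` {0..1}" "y \<in> p ` {0..1}"
    using image_eqI[of x p 0 "{0..1}"] image_eqI[of y p 1 "{0..1}"] by (simp_all add: p_def)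
  ultimately show "y \<in> region n m x"
    using connected_component_maximal[of x "p ` {0..1}" "complement n m"] by blast
qed

definition dominant_generic_from :: "nat \<Rightarrow> nat \<Rightarrow> nat \<Rightarrow> (nat \<Rightarrow> real) \<Rightarrow> bool" where
  "dominant_generic_from n m i x \<longleftrightarrow> (\<forall>a b t. i \<le> a \<and> a < b \<and> b \<le> n+1 \<and> t \<le> m \<longrightarrow>
      x a - x b \<noteq> real t \<and> x b < x a)"

definition dominant_generic :: "nat \<Rightarrow> nat \<Rightarrow> (nat \<Rightarrow> real) set" where
  "dominant_generic n m = {x \<in> V n. dominant_generic_from n m 1 x}"

lemma dominant_generic_iff:
  "x \<in> dominant_generic n m \<longleftrightarrow>
     x \<in> complement n m \<and> (\<forall>a b. 1 \<le> a \<and> a < b \<and> b \<le> n+1 \<longrightarrow> x b < x a)"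
  unfolding dominant_generic_def dominant_generic_from_def complement_iff avoids_arrangement_def
  by blast

lemma dominant_generic_avoids:
  "x \<in> dominant_generic n m \<Longrightarrow> 1 \<le> a \<Longrightarrow> a < b \<Longrightarrow> b \<le> n+1 \<Longrightarrow> t \<le> m \<Longrightarrow> x a - x b \<noteq> real t"
  by (auto simp: dominant_generic_def dominant_generic_from_def)

lemma dominant_generic_less:
  "x \<in> dominant_generic n m \<Longrightarrow> 1 \<le> a \<Longrightarrow> a < b \<Longrightarrow> b \<le> n+1 \<Longrightarrow> x b < x a"
  by (auto simp: dominant_generic_iff)

lemma dominant_generic_le:
  "x \<in> dominant_generic n m \<Longrightarrow> 1 \<le> a \<Longrightarrow> a \<le> b \<Longrightarrow> b \<le> n+1 \<Longrightarrow> x b \<le> x a"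
  using dominant_generic_less[of x n m a b] by (cases "a = b") auto

lemma region_dominant_generic:
  assumes x: "x \<in> dominant_generic n m" and y: "y \<in> region n m x"
  shows "y \<in> dominant_generic n m" "same_side n m x y"
proof -
  have xc: "x \<in> complement n m" using x by (simp add: dominant_generic_iff)
  then show s: "same_side n m x y" using region_iff y by blast
  have "y b < y a" if "1 \<le> a" "a < b" "b \<le> n+1" for a b
    using s that dominant_generic_less[OF x that] unfolding same_side_from_def
    by (metis diff_gt_0_iff_gt le0 of_nat_0)
  then show "y \<in> dominant_generic n m"
    using region_iff[OF xc] y by (simp add: dominant_generic_iff)
qed

lemma region_eq_iff:
  assumes "x \<in> dominant_generic n m" "y \<in> dominant_generic n m"
  shows "region n m x = region n m y \<longleftrightarrow> same_side n m x y"
proof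
  assume "region n m x = region n m y"
  then have "y \<in> region n m x" using assms(2) by (simp add: dominant_generic_iff)
  then show "same_side n m x y" using region_dominant_generic(2)[OF assms(1)] by blast
next
  assume "same_side n m x y"
  then have "y \<in> region n m x" using assms region_iff by (simp add: dominant_generic_iff)
  then show "region n m x = region n m y" by (rule connected_component_eq[symmetric])
qed

lemma dom_regions_eq: "dom_regions n m = region n m ` dominant_generic n m"
proof (intro set_eqI iffI)
  fix R assume "R \<in> dom_regions n m"
  then obtain x where x: "x \<in> complement n m" "R = region n m x" "R \<subseteq> dominant_cone n"
    unfolding dom_regions_def by blast
  then have "x \<in> dominant_cone n" by auto
  then have "x \<in> dominant_generic n m"
    using x(1) unfolding dominant_generic_iff dominant_cone_iff complement_iff avoids_arrangement_def
    by (metis of_nat_0 order_le_less zero_le eq_iff_diff_eq_0)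
  then show "R \<in> region n m ` dominant_generic n m" using x(2) by blast
next
  fix R assume "R \<in> region n m ` dominant_generic n m"
  then obtain x where x: "x \<in> dominant_generic n m" "R = region n m x" by blast
  have "R \<subseteq> dominant_cone n"
    using region_dominant_generic(1)[OF x(1)] x(2)
    by (auto simp: dominant_generic_iff dominant_cone_iff complement_iff less_imp_le)
  then show "R \<in> dom_regions n m"
    unfolding dom_regions_def using x by (auto simp: dominant_generic_iff)
qed

section \<open>The partition of a region\<close>

definition row_cells :: "nat \<Rightarrow> nat \<Rightarrow> (nat \<Rightarrow> real) \<Rightarrow> nat \<Rightarrow> (nat \<times> nat) set" where
  "row_cells n m x i = {(j,t). i < j \<and> j \<le> n+1 \<and> 1 \<le> t \<and> t \<le> m \<and> real t < x i - x j}"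

definition partition_of :: "nat \<Rightarrow> nat \<Rightarrow> (nat \<Rightarrow> real) \<Rightarrow> nat \<Rightarrow> nat" where
  "partition_of n m x i = (if i \<in> {1..n} then card (row_cells n m x i) else 0)"

lemma row_cells_subset: "row_cells n m x i \<subseteq> {i+1..n+1} \<times> {1..m}"
  unfolding row_cells_def by auto

lemma finite_row_cells: "finite (row_cells n m x i)"
  by (rule finite_subset[OF row_cells_subset]) simp

lemma card_row_box: "i \<le> n \<Longrightarrow> card ({i+1..n+1} \<times> {1..m}) = (n - i + 1) * m"
  by (simp add: card_cartesian_product Suc_diff_le)

lemma partition_of_same_side:
  "same_side n m x y \<Longrightarrow> partition_of n m x = partition_of n m y"
proof -
  assume "same_side n m x y"
  then have "row_cells n m x i = row_cells n m y i" if "1 \<le> i" for i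
    using that unfolding row_cells_def same_side_from_def by auto
  then show ?thesis unfolding partition_of_def by (auto intro!: ext)
qed

lemma partition_of_mem_partitions:
  assumes x: "x \<in> dominant_generic n m"
  shows "partition_of n m x \<in> partitions n m"
proof -
  have "partition_of n m x j \<le> partition_of n m x i" if ij: "1 \<le> i" "i \<le> j" "j \<le> n" for i j
  proof -
    have "x j \<le> x i" using dominant_generic_le[OF x] ij by simp
    then have "row_cells n m x j \<subseteq> row_cells n m x i"
      using ij unfolding row_cells_def by auto
    then show ?thesis using ij finite_row_cells unfolding partition_of_def by (simp add: card_mono)
  qed
  moreover have "partition_of n m x i \<le> m * (n - i + 1)" if "i \<in> {1..n}" for i
    using card_mono[OF _ row_cells_subset[of n m x i]] card_row_box[of i n m] that
    by (simp add: partition_of_def mult.commute)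
  ultimately show ?thesis unfolding partitions_def by (auto simp: partition_of_def)
qed

text \<open>If two points agree on all sign conditions strictly below row i, their i-th rows are
  nested: a cell (j, t) in one row only and a cell (k, s) in the other only would force
  the difference x_j - x_k to lie on different sides of the level |s - t| for x and y.\<close>

lemma row_cells_nested:
  assumes x: "x \<in> dominant_generic n m" and y: "y \<in> dominant_generic n m" and i: "1 \<le> i"
    and below: "same_side_from n m (i+1) x y"
  shows "row_cells n m x i \<subseteq> row_cells n m y i \<or> row_cells n m y i \<subseteq> row_cells n m x i"
proof (rule ccontr)
  assume "\<not> ?thesis"
  then obtain p q where "p \<in> row_cells n m x i - row_cells n m y i" "q \<in> row_cells n m y i - row_cells n m x i"
    by blast
  then obtain j t k s where
    jt: "i < j" "j \<le> n+1" "1 \<le> t" "t \<le> m" "real t < x i - x j" "\<not> real t < y i - y j" and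
    ks: "i < k" "k \<le> n+1" "1 \<le> s" "s \<le> m" "real s < y i - y k" "\<not> real s < x i - x k"
    unfolding row_cells_def by blast
  have xk: "x i - x k < real s" using ks(6) dominant_generic_avoids[OF x i ks(1,2,4)] by simp
  have yj: "y i - y j < real t" using jt(6) dominant_generic_avoids[OF y i jt(1,2,4)] by simp
  have agree: "real (c - d) < x a - x b \<longleftrightarrow> real (c - d) < y a - y b"
    if "i < a" "a < b" "b \<le> n+1" "c \<le> m" for a b c d
    using below that unfolding same_side_from_def by (simp add: le_trans[OF diff_le_self])
  consider "j = k" | "j < k" | "k < j" by linarith
  then show False
  proof cases
    case 1 then show False using jt(5) xk ks(5) yj by simp
  next
    case 2
    have "x k < x j" using dominant_generic_less[OF x _ 2 ks(2)] i jt(1) by simp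
    then have "t < s" using jt(5) xk by simp
    then show False using agree[OF jt(1) 2 ks(2) ks(4), of t] jt(5) xk ks(5) yj
      by (simp add: of_nat_diff)
  next
    case 3
    have "y j < y k" using dominant_generic_less[OF y _ 3 jt(2)] i ks(1) by simp
    then have "s < t" using ks(5) yj by simp
    then show False using agree[OF ks(1) 3 jt(2) jt(4), of s] jt(5) xk ks(5) yj
      by (simp add: of_nat_diff)
  qed
qed

lemma same_side_from_row:
  assumes x: "x \<in> dominant_generic n m" and y: "y \<in> dominant_generic n m" and i: "1 \<le> i"
    and below: "same_side_from n m (i+1) x y" and row: "row_cells n m x i = row_cells n m y i"
  shows "same_side_from n m i x y"
  unfolding same_side_from_def
proof (intro allI impI)
  fix a b t assume abt: "i \<le> a \<and> a < b \<and> b \<le> n+1 \<and> t \<le> m"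
  show "real t < x a - x b \<longleftrightarrow> real t < y a - y b"
  proof (cases "a = i")
    case False
    then show ?thesis using below abt unfolding same_side_from_def by auto
  next
    case True
    show ?thesis
    proof (cases "t = 0")
      case True
      then show ?thesis using dominant_generic_less[OF x, of a b] dominant_generic_less[OF y, of a b] abt i
        by auto
    next
      case False
      then have "(b,t) \<in> row_cells n m x i \<longleftrightarrow> (b,t) \<in> row_cells n m y i" using row by simp
      then show ?thesis using False abt \<open>a = i\<close> unfolding row_cells_def by auto
    qed
  qed
qed

lemma same_side_of_partition_eq:
  assumes x: "x \<in> dominant_generic n m" and y: "y \<in> dominant_generic n m"
    and eq: "partition_of n m x = partition_of n m y"
  shows "same_side n m x y"
proof -
  have "1 \<le> n+1" by simp
  then show ?thesis
  proof (induction rule: inc_induct)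
    case base
    show ?case unfolding same_side_from_def by auto
  next
    case (step i)
    have "card (row_cells n m x i) = card (row_cells n m y i)"
      using fun_cong[OF eq, of i] step.hyps unfolding partition_of_def by simp
    moreover have "row_cells n m x i \<subseteq> row_cells n m y i \<or> row_cells n m y i \<subseteq> row_cells n m x i"
      using row_cells_nested[OF x y step.hyps(1)] step.IH by simp
    ultimately have "row_cells n m x i = row_cells n m y i"
      by (metis card_subset_eq finite_row_cells)
    then show ?case using same_side_from_row[OF x y step.hyps(1)] step.IH by simp
  qed
qed

lemma partition_of_eq_iff:
  "x \<in> dominant_generic n m \<Longrightarrow> y \<in> dominant_generic n m \<Longrightarrow>
     partition_of n m x = partition_of n m y \<longleftrightarrow> same_side n m x y"
  using same_side_of_partition_eq partition_of_same_side by blast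

section \<open>Every partition is attained\<close>

lemma card_below_strict_mono:
  fixes K :: "'a::linorder set"
  assumes "finite K" "k1 \<in> K" "k1 < k2"
  shows "card {k\<in>K. k < k1} < card {k\<in>K. k < k2}"
  by (rule psubset_card_mono) (use assms in auto)

lemma rank_image_eq:
  fixes K :: "'a::linorder set"
  assumes fin: "finite K"
  shows "(\<lambda>z. card {k\<in>K. k < z}) ` K = {..<card K}"
proof (rule card_subset_eq)
  let ?g = "\<lambda>z. card {k\<in>K. k < z}"
  have "inj_on ?g K"
  proof (rule inj_onI)
    fix a b assume ab: "a \<in> K" "b \<in> K" "?g a = ?g b"
    show "a = b"
    proof (rule ccontr)
      assume "a \<noteq> b"
      then consider "a < b" | "b < a" by fastforce
      then show False
        using card_below_strict_mono[OF fin ab(1), of b] card_below_strict_mono[OF fin ab(2), of a] ab(3)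
        by cases simp_all
    qed
  qed
  then show "card (?g ` K) = card {..<card K}" by (simp add: card_image)
  show "?g ` K \<subseteq> {..<card K}"
  proof
    fix v assume "v \<in> ?g ` K"
    then obtain z where z: "z \<in> K" "v = ?g z" by auto
    have "{k\<in>K. k < z} \<subset> K" using z by auto
    then show "v \<in> {..<card K}" using z fin by (simp add: psubset_card_mono)
  qed
qed simp

lemma exists_above_with_count_below:
  fixes K :: "real set"
  assumes fin: "finite K" and z0: "z0 \<notin> K"
    and r: "card {k\<in>K. k < z0} \<le> r" "r \<le> card K"
  shows "\<exists>y. z0 < y \<and> y \<notin> K \<and> card {k\<in>K. k < y} = r"
proof (cases "r = card K")
  case True
  define y where "y = Max (insert z0 K) + 1"
  have "\<forall>k\<in>insert z0 K. k \<le> Max (insert z0 K)" using fin by simp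
  then have "\<forall>k\<in>insert z0 K. k < y" unfolding y_def by fastforce
  then have "{k\<in>K. k < y} = K" "z0 < y" "y \<notin> K" by auto
  then show ?thesis using True by (intro exI[of _ y] conjI) simp_all
next
  case False
  then have "r \<in> (\<lambda>z. card {k\<in>K. k < z}) ` K" using rank_image_eq[OF fin] r(2) by simp
  then obtain z where z: "z \<in> K" "card {k\<in>K. k < z} = r" by blast
  have zz: "z0 < z"
  proof (rule ccontr)
    assume "\<not> z0 < z"
    then have "z < z0" using z z0 by (cases "z = z0") auto
    then show False using card_below_strict_mono[OF fin z(1)] z r(1) by fastforce
  qed
  define l where "l = Max (insert z0 {k\<in>K. k < z})"
  have l: "z0 \<le> l" "l < z" "\<And>k. k \<in> K \<Longrightarrow> k < z \<Longrightarrow> k \<le> l"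
    using fin zz unfolding l_def by auto
  define y where "y = (l + z) / 2"
  have yl: "l < y" "y < z" using l(2) unfolding y_def by auto
  have "{k\<in>K. k < y} = {k\<in>K. k < z}" using l(3) yl by fastforce
  moreover have "y \<notin> K" using l(3) yl by fastforce
  ultimately show ?thesis using z l(1) yl by (intro exI[of _ y]) auto
qed

text \<open>With x_(i+1), ..., x_(n+1) fixed, moving x_i across the value x_j + t crosses the
  hyperplane x_i - x_j = t; these crossing values are pairwise distinct by genericity.\<close>

definition crossing_values :: "nat \<Rightarrow> nat \<Rightarrow> (nat \<Rightarrow> real) \<Rightarrow> nat \<Rightarrow> real set" where
  "crossing_values n m x i = (\<lambda>(j,t). x j + real t) ` ({i+1..n+1} \<times> {1..m})"

lemma row_cells_upd_below:
  "i < i' \<Longrightarrow> row_cells n m (x(i := y)) i' = row_cells n m x i'"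
  unfolding row_cells_def by auto

lemma card_crossing_values:
  assumes i: "i \<le> n" and x: "dominant_generic_from n m (i+1) x"
  shows "card (crossing_values n m x i) = (n - i + 1) * m"
    and "card {k \<in> crossing_values n m x i. k < y} = card (row_cells n m (x(i := y)) i)"
proof -
  let ?I = "{i+1..n+1} \<times> {1..m}" and ?f = "\<lambda>(j,t). x j + real t"
  have inj: "inj_on ?f ?I"
  proof (rule inj_onI)
    fix p q assume pq: "p \<in> ?I" "q \<in> ?I" "?f p = ?f q"
    obtain j t where p: "p = (j,t)" by (cases p)
    obtain k s where q: "q = (k,s)" by (cases q)
    have jt: "i < j" "j \<le> n+1" "t \<le> m" and ks: "i < k" "k \<le> n+1" "s \<le> m"
      and e: "x j + real t = x k + real s"
      using pq unfolding p q by auto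
    consider "j = k" | "j < k" | "k < j" by linarith
    then show "p = q"
    proof cases
      case 1
      then show ?thesis using e unfolding p q by simp
    next
      case 2
      then have "x k < x j" "x j - x k \<noteq> real (s - t)"
        using x jt ks unfolding dominant_generic_from_def by auto
      then show ?thesis using e unfolding p q by (cases "s \<le> t") (auto simp: of_nat_diff)
    next
      case 3
      then have "x j < x k" "x k - x j \<noteq> real (t - s)"
        using x jt ks unfolding dominant_generic_from_def by auto
      then show ?thesis using e unfolding p q by (cases "t \<le> s") (auto simp: of_nat_diff)
    qed
  qed
  show "card (crossing_values n m x i) = (n - i + 1) * m"
    unfolding crossing_values_def using card_image[OF inj] card_row_box[OF i] by simp
  have "{k \<in> crossing_values n m x i. k < y} = ?f ` row_cells n m (x(i := y)) i"
    unfolding crossing_values_def row_cells_def by (auto simp: algebra_simps)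
  moreover have "inj_on ?f (row_cells n m (x(i := y)) i)"
    using inj_on_subset[OF inj row_cells_subset] .
  ultimately show "card {k \<in> crossing_values n m x i. k < y} = card (row_cells n m (x(i := y)) i)"
    by (simp add: card_image)
qed

lemma extend_dominant_generic_from:
  assumes lam: "lam \<in> partitions n m" and i: "1 \<le> i" "i \<le> n"
    and x: "dominant_generic_from n m (i+1) x" and row: "card (row_cells n m x (i+1)) = lam (i+1)"
  shows "\<exists>y. dominant_generic_from n m i (x(i := y)) \<and> card (row_cells n m (x(i := y)) i) = lam i"
proof -
  let ?K = "crossing_values n m x i"
  have z0: "x (i+1) \<notin> ?K"
  proof
    assume "x (i+1) \<in> ?K"
    then obtain j t where jt: "i+1 \<le> j" "j \<le> n+1" "1 \<le> t" "t \<le> m" "x (i+1) = x j + real t"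
      unfolding crossing_values_def by auto
    then have "i+1 < j" by (cases "j = i+1") auto
    then have "x (i+1) - x j \<noteq> real t"
      using x jt(2,4) unfolding dominant_generic_from_def by blast
    then show False using jt(5) by simp
  qed
  have "card {k\<in>?K. k < x (i+1)} = lam (i+1)"
  proof -
    have "(j,t) \<in> row_cells n m (x(i := x (i+1))) i \<longleftrightarrow> (j,t) \<in> row_cells n m x (i+1)" for j t
      unfolding row_cells_def by (cases "j = i+1") auto
    then have "row_cells n m (x(i := x (i+1))) i = row_cells n m x (i+1)"
      by (intro set_eqI) (metis surj_pair)
    then show ?thesis using card_crossing_values(2)[OF i(2) x] row by simp
  qed
  moreover have "lam (i+1) \<le> lam i"
    using lam i unfolding partitions_def by (cases "i+1 \<le> n") auto
  moreover have "lam i \<le> m * (n - i + 1)"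
    using lam i unfolding partitions_def by auto
  ultimately obtain y where y: "x (i+1) < y" "y \<notin> ?K" "card {k\<in>?K. k < y} = lam i"
    using exists_above_with_count_below[OF _ z0, of "lam i"] card_crossing_values(1)[OF i(2) x]
    by (auto simp: crossing_values_def mult.commute)
  have "dominant_generic_from n m i (x(i := y))"
    unfolding dominant_generic_from_def
  proof (intro allI impI)
    fix a b t assume abt: "i \<le> a \<and> a < b \<and> b \<le> n+1 \<and> t \<le> m"
    show "(x(i := y)) a - (x(i := y)) b \<noteq> real t \<and> (x(i := y)) b < (x(i := y)) a"
    proof (cases "a = i")
      case False
      then show ?thesis using x abt unfolding dominant_generic_from_def by auto
    next
      case True
      have "x b \<le> x (i+1)"
        using x abt True unfolding dominant_generic_from_def by (cases "b = i+1") (auto intro: less_imp_le)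
      moreover have "y - x b \<noteq> real t"
      proof (cases "t = 0")
        case False
        then have "x b + real t \<in> ?K" unfolding crossing_values_def using abt True by force
        then have "y \<noteq> x b + real t" using y(2) by blast
        then show ?thesis by linarith
      qed (use y(1) \<open>x b \<le> x (i+1)\<close> in simp)
      ultimately show ?thesis using True abt y(1) by auto
    qed
  qed
  then show ?thesis using y(3) card_crossing_values(2)[OF i(2) x] by auto
qed

lemma exists_dominant_generic_from_rows:
  assumes lam: "lam \<in> partitions n m" and i: "1 \<le> i" "i \<le> n+1"
  shows "\<exists>x. dominant_generic_from n m i x \<and> (\<forall>j\<in>{i..n+1}. card (row_cells n m x j) = lam j)"
  using i(2)
proof (induction rule: inc_induct)
  case base
  have "row_cells n m (\<lambda>_. 0) (n+1) = {}" "lam (n+1) = 0"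
    using lam unfolding row_cells_def partitions_def by auto
  then show ?case unfolding dominant_generic_from_def by (intro exI[of _ "\<lambda>_. 0"]) auto
next
  case (step k)
  then obtain x where x: "dominant_generic_from n m (k+1) x"
    "\<forall>j\<in>{k+1..n+1}. card (row_cells n m x j) = lam j" by auto
  have k: "1 \<le> k" "k \<le> n" using i(1) step.hyps by auto
  obtain y where y: "dominant_generic_from n m k (x(k := y))"
    "card (row_cells n m (x(k := y)) k) = lam k"
    using extend_dominant_generic_from[OF lam k x(1)] x(2) k by auto
  have "card (row_cells n m (x(k := y)) j) = lam j" if "j \<in> {k..n+1}" for j
  proof (cases "j = k")
    case False
    then have "k < j" using that by simp
    then show ?thesis using x(2) that row_cells_upd_below[OF \<open>k < j\<close>] by simp
  qed (use y(2) in simp)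
  then show ?case using y(1) by blast
qed

lemma partitions_subset_image_partition_of:
  "partitions n m \<subseteq> partition_of n m ` dominant_generic n m"
proof
  fix lam assume lam: "lam \<in> partitions n m"
  obtain x where x: "dominant_generic_from n m 1 x" "\<forall>j\<in>{1..n+1}. card (row_cells n m x j) = lam j"
    using exists_dominant_generic_from_rows[OF lam order.refl] by auto
  define c where "c = (\<Sum>k=1..n+1. x k) / real (n+1)"
  define z where "z k = (if k \<in> {1..n+1} then x k - c else 0)" for k
  have zd: "z a - z b = x a - x b" if "a \<in> {1..n+1}" "b \<in> {1..n+1}" for a b
    using that unfolding z_def by simp
  have "(\<Sum>k=1..n+1. z k) = (\<Sum>k=1..n+1. x k) - real (n+1) * c"
    unfolding z_def by (simp add: sum_subtractf)
  then have "z \<in> V n" unfolding V_def c_def by (auto simp: z_def)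
  moreover have "dominant_generic_from n m 1 z"
    unfolding dominant_generic_from_def
  proof (intro allI impI)
    fix a b t assume abt: "1 \<le> a \<and> a < b \<and> b \<le> n+1 \<and> t \<le> m"
    then have "x a - x b \<noteq> real t \<and> x b < x a"
      using x(1) unfolding dominant_generic_from_def by blast
    then show "z a - z b \<noteq> real t \<and> z b < z a" using zd[of a b] abt by auto
  qed
  moreover have "partition_of n m z = lam"
  proof -
    have "row_cells n m z i = row_cells n m x i" if "i \<in> {1..n}" for i
      using that zd unfolding row_cells_def by auto
    then show ?thesis
      using x(2) lam unfolding partition_of_def partitions_def by (auto intro!: ext)
  qed
  ultimately show "lam \<in> partition_of n m ` dominant_generic n m"
    unfolding dominant_generic_def by blast
qed

section \<open>Separating walls\<close>

lemma aff_hull_subset_hyp: "S \<subseteq> hyp n a k \<Longrightarrow> aff_hull S \<subseteq> hyp n a k"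
proof
  fix z assume S: "S \<subseteq> hyp n a k" and "z \<in> aff_hull S"
  then obtain F u where F: "finite F" "F \<subseteq> S" "sum u F = 1" "z = (\<lambda>k. \<Sum>y\<in>F. u y * y k)"
    unfolding aff_hull_def by blast
  have FH: "y \<in> V n" "ip n y a = k" if "y \<in> F" for y using that F(2) S unfolding hyp_def by auto
  have out: "z i = 0" if "i \<notin> {1..n+1}" for i
    using FH(1) that unfolding F(4) V_def by (auto intro!: sum.neutral)
  have "(\<Sum>i=1..n+1. z i) = (\<Sum>y\<in>F. u y * (\<Sum>i=1..n+1. y i))"
    unfolding F(4) sum_distrib_left by (rule sum.swap)
  then have "(\<Sum>i=1..n+1. z i) = 0" using FH(1) unfolding V_def by simp
  with out have zV: "z \<in> V n" unfolding V_def by blast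
  have "ip n z a = (\<Sum>y\<in>F. u y * ip n y a)"
    unfolding F(4) ip_def sum_distrib_left sum_distrib_right mult.assoc by (rule sum.swap)
  then have "ip n z a = k" using FH(2) F(3) by (simp add: sum_distrib_right[symmetric])
  with zV show "z \<in> hyp n a k" unfolding hyp_def by simp
qed

lemma mem_aff_hull_line:
  assumes "z \<in> S" "(\<lambda>k. z k + d * (h k - z k)) \<in> S" "d \<noteq> 0"
  shows "h \<in> aff_hull S"
proof (cases "h = z")
  case True
  then show ?thesis unfolding aff_hull_def using assms(1)
    by (intro CollectI exI[of _ "{z}"] exI[of _ "\<lambda>_. 1"]) auto
next
  case False
  let ?u = "\<lambda>k. z k + d * (h k - z k)"
  have ne: "?u \<noteq> z"
    using False assms(3) by (metis (no_types, lifting) add_cancel_left_right eq_iff_diff_eq_0 ext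
        mult_eq_0_iff)
  define w where "w y = (if y = z then 1 - 1/d else 1/d)" for y :: "nat \<Rightarrow> real"
  have "h = (\<lambda>k. \<Sum>y\<in>{z, ?u}. w y * y k)"
    using ne assms(3) unfolding w_def by (auto simp: field_simps)
  moreover have "sum w {z, ?u} = 1" using ne unfolding w_def by simp
  ultimately show ?thesis unfolding aff_hull_def using assms(1,2)
    by (intro CollectI exI[of _ "{z, ?u}"] exI[of _ w]) auto
qed

lemma eventually_sign_at_right_0:
  fixes e d :: real
  assumes "e \<noteq> 0"
  shows "eventually (\<lambda>s. (0 < e + s * d \<longleftrightarrow> 0 < e) \<and> e + s * d \<noteq> 0) (at_right 0)"
proof -
  have t: "((\<lambda>s. e + s * d) \<longlongrightarrow> e) (at_right 0)"
    using tendsto_add[OF tendsto_const tendsto_mult_left_zero[OF tendsto_ident_at]] by simp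
  show ?thesis
  proof (cases "0 < e")
    case True
    show ?thesis using order_tendstoD(1)[OF t True] by eventually_elim (use True in auto)
  next
    case False
    then have "e < 0" using assms by simp
    show ?thesis using order_tendstoD(2)[OF t \<open>e < 0\<close>] by eventually_elim (use False in auto)
  qed
qed

definition hyp_index :: "nat \<Rightarrow> nat \<Rightarrow> (nat \<times> nat \<times> nat) set" where
  "hyp_index n m = {(a,b,t). 1 \<le> a \<and> a < b \<and> b \<le> n+1 \<and> t \<le> m}"

lemma finite_hyp_index: "finite (hyp_index n m)"
  by (rule finite_subset[of _ "{..n+1} \<times> {..n+1} \<times> {..m}"]) (auto simp: hyp_index_def)

definition same_side_off :: "nat \<Rightarrow> nat \<Rightarrow> nat \<Rightarrow> (nat \<Rightarrow> real) \<Rightarrow> (nat \<Rightarrow> real) \<Rightarrow> bool" where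
  "same_side_off n m i x u \<longleftrightarrow> (\<forall>(a,b,t) \<in> hyp_index n m. (a,b) \<noteq> (i,i+1) \<longrightarrow>
     u a - u b \<noteq> real t \<and> (real t < u a - u b \<longleftrightarrow> real t < x a - x b))"

lemma same_side_offI:
  assumes "\<And>a b t. 1 \<le> a \<Longrightarrow> a < b \<Longrightarrow> b \<le> n+1 \<Longrightarrow> t \<le> m \<Longrightarrow> (a,b) \<noteq> (i,i+1) \<Longrightarrow>
     u a - u b \<noteq> real t \<and> (real t < u a - u b \<longleftrightarrow> real t < x a - x b)"
  shows "same_side_off n m i x u"
  unfolding same_side_off_def hyp_index_def using assms by fastforce

lemma eventually_same_side_off:
  assumes "same_side_off n m i x u"
  shows "eventually (\<lambda>s. same_side_off n m i x (\<lambda>k. u k + s * v k)) (at_right 0)"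
  unfolding same_side_off_def
proof (rule eventually_ball_finite[OF finite_hyp_index], clarify)
  fix a b t assume abt: "(a,b,t) \<in> hyp_index n m"
  show "eventually (\<lambda>s. (a,b) \<noteq> (i,i+1) \<longrightarrow> u a + s * v a - (u b + s * v b) \<noteq> real t \<and>
      (real t < u a + s * v a - (u b + s * v b) \<longleftrightarrow> real t < x a - x b)) (at_right 0)"
  proof (cases "(a,b) = (i,i+1)")
    case False
    then have o: "u a - u b \<noteq> real t" "real t < u a - u b \<longleftrightarrow> real t < x a - x b"
      using assms abt unfolding same_side_off_def by auto
    then have "u a - u b - real t \<noteq> 0" by simp
    from eventually_sign_at_right_0[OF this, of "v a - v b"]
    show ?thesis
    proof eventually_elim
      case (elim s)
      have "u a + s * v a - (u b + s * v b) - real t = u a - u b - real t + s * (v a - v b)"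
        by (simp add: algebra_simps)
      then show ?case using elim o by auto
    qed
  qed simp
qed

lemma mem_region_of_same_side_off:
  assumes x: "x \<in> dominant_generic n m" and u: "u \<in> V n" and off: "same_side_off n m i x u"
    and ui: "real m < u i - u (i+1)" and xi: "real m < x i - x (i+1)"
  shows "u \<in> region n m x"
proof -
  have signs: "u a - u b \<noteq> real t \<and> (real t < x a - x b \<longleftrightarrow> real t < u a - u b)"
    if "1 \<le> a" "a < b" "b \<le> n+1" "t \<le> m" for a b t
  proof (cases "(a,b) = (i,i+1)")
    case True
    then show ?thesis using ui xi that(4) by auto
  next
    case False
    then show ?thesis using off that unfolding same_side_off_def hyp_index_def by auto
  qed
  have "avoids_arrangement n m u" "same_side n m x u"
    unfolding avoids_arrangement_def same_side_from_def using signs by blast+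
  moreover have "x \<in> complement n m" using x by (simp add: dominant_generic_iff)
  ultimately show ?thesis using region_iff u by (simp add: complement_iff)
qed

text \<open>The projection of \<epsilon>_1 + ... + \<epsilon>_i onto V: moving along it changes exactly the
  differences x_a - x_b with a \<le> i < b.\<close>

definition lower_indicator :: "nat \<Rightarrow> nat \<Rightarrow> nat \<Rightarrow> real" where
  "lower_indicator n i k =
     (if 1 \<le> k \<and> k \<le> i then 1 else 0) - (if k \<in> {1..n+1} then real i / real (n+1) else 0)"

lemma lower_indicator_mem_V:
  assumes i: "i \<le> n"
  shows "lower_indicator n i \<in> V n"
proof -
  have "(\<Sum>k=1..n+1. if 1 \<le> k \<and> k \<le> i then 1 else 0 :: real) = (\<Sum>k=1..i. 1)"
    using i by (intro sum.mono_neutral_cong_right) auto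
  then have "(\<Sum>k=1..n+1. lower_indicator n i k) = real i - (\<Sum>k=1..n+1. real i / real (n+1))"
    unfolding lower_indicator_def by (simp add: sum_subtractf)
  then have "(\<Sum>k=1..n+1. lower_indicator n i k) = 0" by simp
  moreover have "lower_indicator n i k = 0" if "k \<notin> {1..n+1}" for k
    using i that unfolding lower_indicator_def by auto
  ultimately show ?thesis unfolding V_def by blast
qed

lemma lower_indicator_diff:
  "a \<in> {1..n+1} \<Longrightarrow> b \<in> {1..n+1} \<Longrightarrow>
     lower_indicator n i a - lower_indicator n i b = (if a \<le> i then 1 else 0) - (if b \<le> i then 1 else 0)"
  unfolding lower_indicator_def by auto

lemma mem_closure_region:
  assumes x: "x \<in> dominant_generic n m" and i: "1 \<le> i" "i \<le> n"
    and u: "u \<in> V n" "u i - u (i+1) = real m" and off: "same_side_off n m i x u"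
    and xi: "real m < x i - x (i+1)"
  shows "u \<in> closure (region n m x)"
proof -
  define w where "w s = (\<lambda>k. u k + s * lower_indicator n i k)" for s :: real
  have "eventually (\<lambda>s. 0 < s \<and> same_side_off n m i x (w s)) (at_right 0)"
    unfolding w_def by (intro eventually_conj eventually_at_right_less eventually_same_side_off off)
  then have "eventually (\<lambda>s. w s \<in> closure (region n m x)) (at_right 0)"
  proof eventually_elim
    case (elim s)
    have "w s \<in> V n"
      using V_lin_comb[OF u(1) lower_indicator_mem_V[OF i(2)], of 1 s] by (simp add: w_def)
    moreover have "real m < w s i - w s (i+1)"
      using elim u(2) i lower_indicator_diff[of i n "i+1" i] by (simp add: w_def algebra_simps)
    ultimately show ?case
      using mem_region_of_same_side_off[OF x _ _ _ xi] elim closure_subset by blast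
  qed
  moreover have "(w \<longlongrightarrow> u) (at_right 0)"
  proof -
    have "continuous_on UNIV w" unfolding w_def
      by (intro continuous_on_coordinatewise_then_product continuous_intros)
    then have "(w \<longlongrightarrow> w 0) (at 0)"
      by (simp add: continuous_on_eq_continuous_at isCont_def)
    moreover have "w 0 = u" by (simp add: w_def)
    ultimately show ?thesis by (metis at_le tendsto_mono top_greatest)
  qed
  ultimately show ?thesis
    by (rule Lim_in_closed_set[OF closed_closure _ trivial_limit_at_right_real])
qed

text \<open>Moving x against the lower indicator by the excess of x_i - x_(i+1) over m lands on
  H_{\<alpha>_i,m}; the other differences that change are x_a - x_b with a \<le> i < b, and these stay
  above m.\<close>

lemma exists_facet_point:
  assumes x: "x \<in> dominant_generic n m" and i: "1 \<le> i" "i \<le> n"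
    and xi: "real m < x i - x (i+1)"
  shows "\<exists>z. z \<in> V n \<and> z i - z (i+1) = real m \<and> same_side_off n m i x z"
proof -
  define c where "c = x i - x (i+1) - real m"
  define z where "z = (\<lambda>k. x k - c * lower_indicator n i k)"
  have "z \<in> V n" using V_lin_comb[OF _ lower_indicator_mem_V[OF i(2)], of x 1 "-c"] x
    by (simp add: z_def dominant_generic_def)
  moreover have zd: "z a - z b = x a - x b - c * ((if a \<le> i then 1 else 0) - (if b \<le> i then 1 else 0))"
    if "a \<in> {1..n+1}" "b \<in> {1..n+1}" for a b
  proof -
    have "z a - z b = x a - x b - c * (lower_indicator n i a - lower_indicator n i b)"
      unfolding z_def by (simp add: algebra_simps)
    then show ?thesis using lower_indicator_diff[OF that, of i] by simp
  qed
  moreover have "same_side_off n m i x z"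
  proof (rule same_side_offI)
    fix a b t assume abt: "1 \<le> a" "a < b" "b \<le> n+1" "t \<le> m" and ne: "(a,b) \<noteq> (i,i+1)"
    show "z a - z b \<noteq> real t \<and> (real t < z a - z b \<longleftrightarrow> real t < x a - x b)"
    proof (cases "a \<le> i \<and> i < b")
      case True
      have "x i \<le> x a" "x b \<le> x (i+1)"
        using dominant_generic_le[OF x] abt True by auto
      moreover have "x i < x a \<or> x b < x (i+1)"
      proof (cases "a = i")
        case True
        then have "i+1 < b" using ne \<open>a \<le> i \<and> i < b\<close> by auto
        then show ?thesis using dominant_generic_less[OF x, of "i+1" b] i abt by auto
      next
        case False
        then have "a < i" using \<open>a \<le> i \<and> i < b\<close> by auto
        then show ?thesis using dominant_generic_less[OF x, of a i] i abt by auto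
      qed
      ultimately have "x i - x (i+1) < x a - x b" by linarith
      then show ?thesis using zd[of a b] True abt xi unfolding c_def by auto
    next
      case False
      then show ?thesis using zd[of a b] abt dominant_generic_avoids[OF x abt] by auto
    qed
  qed
  moreover have "z i - z (i+1) = real m" using zd[of i "i+1"] i unfolding c_def by simp
  ultimately show ?thesis by blast
qed

lemma hyp_subset_aff_hull_facet:
  assumes x: "x \<in> dominant_generic n m" and i: "1 \<le> i" "i \<le> n"
    and xi: "real m < x i - x (i+1)"
  defines "H \<equiv> hyp n (simple_root i) (real m)"
  shows "H \<subseteq> aff_hull (H \<inter> closure (region n m x))"
proof
  fix h assume "h \<in> H"
  then have h: "h \<in> V n" "h i - h (i+1) = real m" using i unfolding H_def hyp_def by (auto simp: ip_simple_root)
  obtain z where z: "z \<in> V n" "z i - z (i+1) = real m" "same_side_off n m i x z"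
    using exists_facet_point[OF x i xi] by blast
  define u where "u d = (\<lambda>k. z k + d * (h k - z k))" for d
  have uV: "u d \<in> V n" for d
    using V_lin_comb[OF z(1) h(1), of "1-d" d] by (simp add: u_def algebra_simps)
  have ui: "u d i - u d (i+1) = real m" for d using z(2) h(2) by (simp add: u_def algebra_simps)
  have "eventually (\<lambda>d. 0 < d \<and> same_side_off n m i x (u d)) (at_right 0)"
    unfolding u_def by (intro eventually_conj eventually_at_right_less eventually_same_side_off z(3))
  then obtain d where d: "0 < d" "same_side_off n m i x (u d)"
    using eventually_happens'[OF trivial_limit_at_right_real] by blast
  have "u d \<in> H \<inter> closure (region n m x)" "z \<in> H \<inter> closure (region n m x)"
    using mem_closure_region[OF x i] uV ui z d xi i unfolding H_def hyp_def
    by (auto simp: ip_simple_root)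
  then show "h \<in> aff_hull (H \<inter> closure (region n m x))"
    using mem_aff_hull_line d(1) unfolding u_def by fastforce
qed

lemma sum_scaled_eps: "j \<in> {1..n+1} \<Longrightarrow> (\<Sum>k=1..n+1. c * eps j k) = c"
  unfolding eps_def by (simp add: if_distrib cong: if_cong)

lemma eps_comb_mem_V:
  assumes "a \<in> {1..n+1}" "b \<in> {1..n+1}" "r \<in> {1..n+1}" "c1 + c2 + c3 = 0"
  shows "(\<lambda>k. c1 * eps a k + c2 * eps b k + c3 * eps r k) \<in> V n"
proof -
  have "(\<Sum>k=1..n+1. c1 * eps a k + c2 * eps b k + c3 * eps r k) =
      (\<Sum>k=1..n+1. c1 * eps a k) + (\<Sum>k=1..n+1. c2 * eps b k) + (\<Sum>k=1..n+1. c3 * eps r k)"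
    by (simp add: sum.distrib)
  also have "\<dots> = 0" using assms sum_scaled_eps by simp
  finally show ?thesis using assms unfolding V_def eps_def by auto
qed

text \<open>H_{\<alpha>_i,c} determines \<alpha> and c: the points v_0 = (c/2) \<epsilon>_i - (c/2) \<epsilon>_(i+1) and
  v_0 + \<epsilon>_i + \<epsilon>_(i+1) - 2\<epsilon>_r (r \<noteq> i, i+1) of H_{\<alpha>_i,c} must give the same value of any
  other root defining the same hyperplane.\<close>

lemma hyp_eq_simple_root_hyp:
  assumes i: "1 \<le> i" "i \<le> n" and a: "a \<in> pos_roots n"
    and H: "hyp n a k = hyp n (simple_root i) c"
  shows "a = simple_root i \<and> k = c"
proof -
  obtain p b where pb: "1 \<le> p" "p < b" "b \<le> n+1" "a = alpha p (b-1)" using a pos_roots_iff by blast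
  have ipa: "ip n y a = y p - y b" for y using pb ip_alpha by simp
  define v0 where "v0 = (\<lambda>k. c / 2 * eps i k - c / 2 * eps (i+1) k)"
  define w where "w r = (\<lambda>k. (c / 2 + 1) * eps i k + (- c / 2 + 1) * eps (i+1) k + (-2) * eps r k)" for r
  have v0H: "v0 \<in> hyp n (simple_root i) c"
    unfolding hyp_def using eps_comb_mem_V[of i n "i+1" i "c / 2" "- c / 2" 0] i
    by (simp add: ip_simple_root v0_def eps_def)
  have wH: "w r \<in> hyp n (simple_root i) c" if r: "r \<in> {1..n+1}" "r \<noteq> i" "r \<noteq> i+1" for r
    unfolding hyp_def using eps_comb_mem_V[of i n "i+1" r "c / 2 + 1" "- c / 2 + 1" "-2"] i r
    by (simp add: ip_simple_root w_def eps_def)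
  have k: "v0 p - v0 b = k" using v0H H ipa unfolding hyp_def by auto
  have key: "eps i p + eps (i+1) p - 2 * eps r p = eps i b + eps (i+1) b - 2 * eps r b"
    if r: "r \<in> {1..n+1}" "r \<noteq> i" "r \<noteq> i+1" for r
  proof -
    have diff: "w r j - v0 j = eps i j + eps (i+1) j - 2 * eps r j" for j
      unfolding w_def v0_def by (simp add: algebra_simps)
    have "w r p - w r b = v0 p - v0 b" using wH[OF r] H ipa k unfolding hyp_def by auto
    then show ?thesis using diff[of p] diff[of b] by linarith
  qed
  have "p = i"
  proof (rule ccontr)
    assume "p \<noteq> i"
    show False
    proof (cases "p = i+1")
      case True
      then have "b \<in> {1..n+1}" "b \<noteq> i" "b \<noteq> i+1" using pb by auto
      from key[OF this] show False using True pb by (simp add: eps_def)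
    next
      case False
      then have "p \<in> {1..n+1}" "p \<noteq> i" "p \<noteq> i+1" using pb \<open>p \<noteq> i\<close> by auto
      from key[OF this] have "(if b = i then 1 else 0) + (if b = i+1 then 1 else 0) = (-2::real)"
        using pb \<open>p \<noteq> i\<close> False by (simp add: eps_def)
      then show False by (cases "b = i"; cases "b = i+1") auto
    qed
  qed
  moreover have "b = i+1"
  proof (rule ccontr)
    assume "b \<noteq> i+1"
    then have "b \<in> {1..n+1}" "b \<noteq> i" "b \<noteq> i+1" using pb \<open>p = i\<close> by auto
    from key[OF this] have "(if b = i+1 then 1 else 0) = (3::real)" using \<open>p = i\<close> pb by (simp add: eps_def)
    then show False by (cases "b = i+1") auto
  qed
  ultimately show ?thesis using k pb unfolding simple_root_def v0_def eps_def by simp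
qed

lemma sep_wall_simple_root_iff:
  assumes x: "x \<in> dominant_generic n m" and i: "1 \<le> i" "i \<le> n" and m: "1 \<le> m"
  shows "sep_wall n m (region n m x) (hyp n (simple_root i) (real m)) \<longleftrightarrow> real m < x i - x (i+1)"
proof
  assume "sep_wall n m (region n m x) (hyp n (simple_root i) (real m))"
  then obtain a k where a: "a \<in> pos_roots n" "hyp n (simple_root i) (real m) = hyp n a k"
      "\<forall>y \<in> region n m x. (ip n y a - k) * (ip n (\<lambda>_. 0) a - k) < 0"
    unfolding sep_wall_def by blast
  have "a = simple_root i" "k = real m" using hyp_eq_simple_root_hyp[OF i a(1) a(2)[symmetric]] by auto
  moreover have "x \<in> region n m x" using x by (simp add: dominant_generic_iff)
  ultimately have "0 < (x i - x (i+1) - real m) * real m"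
    using a(3) i by (force simp: ip_simple_root ip_zero_left)
  then show "real m < x i - x (i+1)" using m by (simp add: zero_less_mult_iff)
next
  assume xi: "real m < x i - x (i+1)"
  let ?H = "hyp n (simple_root i) (real m)"
  have "aff_hull (?H \<inter> closure (region n m x)) = ?H"
    using aff_hull_subset_hyp[of "?H \<inter> closure (region n m x)"] hyp_subset_aff_hull_facet[OF x i xi]
    by blast
  moreover have "real m < y i - y (i+1)" if "y \<in> region n m x" for y
    using region_dominant_generic(2)[OF x that] xi i unfolding same_side_from_def by auto
  ultimately show "sep_wall n m (region n m x) ?H"
    unfolding sep_wall_def cat_arr_def using simple_root_mem_pos_roots[OF i] i m
    by (fastforce simp: ip_simple_root ip_zero_left mult_less_0_iff)
qed

lemma partition_of_eq_max_iff:
  assumes x: "x \<in> dominant_generic n m" and i: "1 \<le> i" "i \<le> n" and m: "1 \<le> m"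
  shows "partition_of n m x i = (n - i + 1) * m \<longleftrightarrow> real m < x i - x (i+1)"
proof -
  let ?I = "{i+1..n+1} \<times> {1..m}"
  have "partition_of n m x i = (n - i + 1) * m \<longleftrightarrow> row_cells n m x i = ?I"
  proof
    assume "partition_of n m x i = (n - i + 1) * m"
    then have "card (row_cells n m x i) = card ?I"
      using i card_row_box[OF i(2)] by (simp add: partition_of_def)
    then show "row_cells n m x i = ?I" using card_subset_eq[OF _ row_cells_subset] by simp
  qed (use i card_row_box[OF i(2)] in \<open>simp add: partition_of_def\<close>)
  also have "\<dots> \<longleftrightarrow> (i+1, m) \<in> row_cells n m x i"
  proof
    assume "(i+1, m) \<in> row_cells n m x i"
    then have xi: "real m < x i - x (i+1)" unfolding row_cells_def by simp
    have "p \<in> row_cells n m x i" if "p \<in> ?I" for p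
    proof -
      obtain j t where p: "p = (j,t)" by (cases p)
      have "x j \<le> x (i+1)" using dominant_generic_le[OF x, of "i+1" j] that i unfolding p by auto
      then show ?thesis using that xi unfolding p row_cells_def by auto
    qed
    then show "row_cells n m x i = ?I" using row_cells_subset by blast
  qed (use i m in simp)
  also have "\<dots> \<longleftrightarrow> real m < x i - x (i+1)" using i m unfolding row_cells_def by simp
  finally show ?thesis .
qed

lemma bij_betw_image_factor:
  assumes eq: "\<forall>x\<in>A. \<forall>y\<in>A. g x = g y \<longleftrightarrow> f x = f y"
  shows "\<exists>\<phi>. bij_betw \<phi> (g ` A) (f ` A) \<and> (\<forall>x\<in>A. \<phi> (g x) = f x)"
proof -
  define \<phi> where "\<phi> R = f (SOME x. x \<in> A \<and> g x = R)" for R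
  have \<phi>: "\<phi> (g x) = f x" if "x \<in> A" for x
  proof -
    have "(SOME y. y \<in> A \<and> g y = g x) \<in> A \<and> g (SOME y. y \<in> A \<and> g y = g x) = g x"
      using someI_ex[of "\<lambda>y. y \<in> A \<and> g y = g x"] that by blast
    then show ?thesis using eq that unfolding \<phi>_def by metis
  qed
  have "inj_on \<phi> (g ` A)"
  proof (rule inj_onI)
    fix R S assume "R \<in> g ` A" "S \<in> g ` A" "\<phi> R = \<phi> S"
    then obtain x y where "x \<in> A" "y \<in> A" "R = g x" "S = g y" "f x = f y" using \<phi> by auto
    then show "R = S" using eq by metis
  qed
  moreover have "\<phi> ` g ` A = f ` A" using \<phi> by (simp add: image_image)
  ultimately show ?thesis using \<phi> unfolding bij_betw_def by blast
qed

theorem theorem1p3: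
  fixes n m :: nat
  assumes "1 \<le> n" and "1 \<le> m"
  shows "\<exists>\<phi>. bij_betw \<phi> (dom_regions n m) (partitions n m) \<and>
    (\<forall>i \<in> {1..n}. \<forall>R \<in> dom_regions n m.
       sep_wall n m R (hyp n (simple_root i) (real m)) \<longleftrightarrow> \<phi> R i = (n - i + 1) * m)"
proof -
  let ?G = "dominant_generic n m"
  have img: "partition_of n m ` ?G = partitions n m"
    using partition_of_mem_partitions partitions_subset_image_partition_of by blast
  have "\<forall>x\<in>?G. \<forall>y\<in>?G. region n m x = region n m y \<longleftrightarrow> partition_of n m x = partition_of n m y"
    using region_eq_iff partition_of_eq_iff by blast
  from bij_betw_image_factor[OF this] obtain \<phi>
    where \<phi>: "bij_betw \<phi> (region n m ` ?G) (partitions n m)"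
      "\<forall>x\<in>?G. \<phi> (region n m x) = partition_of n m x"
    unfolding img by blast
  have "sep_wall n m R (hyp n (simple_root i) (real m)) \<longleftrightarrow> \<phi> R i = (n - i + 1) * m"
    if i: "i \<in> {1..n}" and R: "R \<in> region n m ` ?G" for i R
  proof -
    obtain x where x: "x \<in> ?G" "R = region n m x" using R by blast
    show ?thesis using sep_wall_simple_root_iff[OF x(1) _ _ assms(2)]
        partition_of_eq_max_iff[OF x(1) _ _ assms(2)] \<phi>(2) x i by simp
  qed
  then show ?thesis unfolding dom_regions_eq using \<phi>(1) by (intro exI[of _ \<phi>]) blast
qed

end
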